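(* Let $N\ge1$, let $T$ be the infinite $N$-ary tree, and let $\tilde T$ be the graph with the same vertices and edges as $T$ together with one additional loop edge from $\emptyset$ to itself. For $n\in\mathbb{N}$ let $N_{\tilde T}(n)$ be the number of paths of length $n$ in $\tilde T$ from $\emptyset$ to $\emptyset$, i.e., sequences $(w_0,w_1,\dots,w_n)$ of vertices with $w_0=w_n=\emptyset$ and $w_{k-1},w_k$ joined by an edge of $\tilde T$ for each $k$ (so $w_{k-1}=w_k=\emptyset$ is allowed via the loop). Let $\mu_{c+p}$ be the measure on $[-1,1]$ given by $$d\mu_{c+p}=\frac{\frac{2}{\pi}\sqrt{1-x^2}}{1-2N^{-1/2}x+N^{-1}}\,dx.$$ Then $$\int x^n\,d\mu_{c+p}(x)=\frac{1}{(2\sqrt N)^n}N_{\tilde T}(n),\qquad n\in\mathbb{N}.$$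
   Context: The infinite $N$-ary tree $T$ has vertex set the finite words over $\{1,\dots,N\}$ including the empty word $\emptyset$, and edges exactly the pairs $\{\omega,\omega i\}$, where $\omega i$ is $\omega$ with the letter $i\in\{1,\dots,N\}$ appended. *)

theory Defs
  imports "HOL-Analysis.Analysis"
begin

definition tree_vertices :: "nat \<Rightarrow> nat list set" where
  "tree_vertices N = {w. set w \<subseteq> {1..N}}"

definition tilde_adj :: "nat \<Rightarrow> nat list \<Rightarrow> nat list \<Rightarrow> bool" where
  "tilde_adj N u v \<longleftrightarrow>
     u \<in> tree_vertices N \<and> v \<in> tree_vertices N \<and>
     ((\<exists>i\<in>{1..N}. v = u @ [i] \<or> u = v @ [i]) \<or> (u = [] \<and> v = []))"

definition root_paths :: "nat \<Rightarrow> nat \<Rightarrow> nat list list set" where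
  "root_paths N n = {ws. length ws = n + 1 \<and> ws ! 0 = [] \<and> ws ! n = [] \<and>
      (\<forall>k<n. tilde_adj N (ws ! k) (ws ! (k + 1)))}"

definition N_tilde :: "nat \<Rightarrow> nat \<Rightarrow> nat" where
  "N_tilde N n = card (root_paths N n)"

definition mu_cp_density :: "nat \<Rightarrow> real \<Rightarrow> real" where
  "mu_cp_density N x = (2 / pi) * sqrt (1 - x\<^sup>2) / (1 - 2 * x / sqrt (real N) + 1 / real N)"

end

theory Submission
  imports Defs
begin

text \<open>
  The number of walks from the root to a vertex depends only on the depth of the vertex and obeys
  the recursion of walks on the half line \<open>{0, 1, 2, \<dots>}\<close> with a loop at \<open>0\<close>. On the analytic
  side put \<open>a = 1 / \<surd>N\<close>, so that the density is \<open>\<sigma>(x) / (1 - 2 a x + a\<^sup>2)\<close> with \<open>\<sigma>\<close> the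
  semicircle density. The polynomials \<open>P_0 = 1\<close>, \<open>P_k = U_k - a U_(k-1)\<close> (\<open>U_k\<close> the Chebyshev
  polynomials of the second kind) satisfy \<open>2 x P_k = P_(k+1) + P_(k-1)\<close> for \<open>k \<ge> 1\<close> and
  \<open>2 x P_0 = a P_0 + P_1\<close>, and they integrate to \<open>\<delta>_k0\<close> against \<open>\<mu>\<close>: multiplying by the
  denominator turns \<open>\<mu>\<close> into \<open>\<sigma>\<close>, under which \<open>U_k\<close> has mean \<open>\<delta>_k0\<close>; this gives a first-order
  recursion for the integrals of \<open>P_k - a P_(k+1)\<close>, and the remaining degree of freedom is fixed by
  the linear growth of \<open>P_k\<close> against the geometric decay of \<open>a\<^sup>k\<close> (for \<open>a = 1\<close>, by the total
  mass). Expanding \<open>x\<^sup>n P_k\<close> by the recurrence computes the moments as weighted half-line walks,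
  which after rescaling by \<open>(2 \<surd>N)\<^sup>n\<close> are the walk counts on the tree.
\<close>

subsection \<open>Counting walks in the tree with a loop at the root\<close>

definition root_walks :: "nat \<Rightarrow> nat \<Rightarrow> nat list \<Rightarrow> nat list list set" where
  "root_walks N n v = {ws. length ws = n + 1 \<and> ws ! 0 = [] \<and> ws ! n = v \<and>
      (\<forall>k<n. tilde_adj N (ws ! k) (ws ! (k + 1)))}"

text \<open>The number of walks of length \<open>n\<close> from the root to a vertex of depth \<open>d\<close>: such a vertex
  has one neighbour of depth \<open>d - 1\<close> (the root itself via the loop when \<open>d = 0\<close>) and \<open>N\<close>
  neighbours of depth \<open>d + 1\<close>.\<close>
fun depth_walks :: "nat \<Rightarrow> nat \<Rightarrow> nat \<Rightarrow> nat" where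
  "depth_walks N 0 d = (if d = 0 then 1 else 0)"
| "depth_walks N (Suc n) 0 = depth_walks N n 0 + N * depth_walks N n 1"
| "depth_walks N (Suc n) (Suc d) = depth_walks N n d + N * depth_walks N n (Suc (Suc d))"

lemma root_paths_eq_root_walks: "root_paths N n = root_walks N n []"
  unfolding root_paths_def root_walks_def by simp

lemma root_walks_0: "root_walks N 0 v = (if v = [] then {[[]]} else {})"
proof -
  have "ws \<in> root_walks N 0 v \<longleftrightarrow> v = [] \<and> ws = [[]]" for ws
    unfolding root_walks_def by (cases ws) auto
  then show ?thesis by auto
qed

lemma root_walks_Suc:
  "root_walks N (Suc n) v = (\<Union>u\<in>{u. tilde_adj N u v}. (\<lambda>ws. ws @ [v]) ` root_walks N n u)"
proof (intro equalityI subsetI)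
  fix ws assume "ws \<in> root_walks N (Suc n) v"
  then have len: "length ws = n + 2" and start: "ws ! 0 = []" and last_v: "ws ! Suc n = v"
    and adj: "\<forall>k<Suc n. tilde_adj N (ws ! k) (ws ! (k + 1))"
    by (auto simp: root_walks_def)
  obtain ws' x where ws: "ws = ws' @ [x]"
    using len by (cases ws rule: rev_cases) auto
  have len': "length ws' = n + 1" using len ws by simp
  have prefix: "ws ! k = ws' ! k" if "k \<le> n" for k
    using that len' ws by (simp add: nth_append)
  have "x = v" using last_v ws len' by (simp add: nth_append)
  moreover have "tilde_adj N (ws' ! k) (ws' ! (k + 1))" if "k < n" for k
    using adj[rule_format, of k] that prefix[of k] prefix[of "k + 1"] by simp
  then have "ws' \<in> root_walks N n (ws' ! n)"
    unfolding root_walks_def using len' start prefix[of 0] by auto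
  moreover have "tilde_adj N (ws' ! n) v" using adj last_v prefix[of n] by auto
  ultimately show "ws \<in> (\<Union>u\<in>{u. tilde_adj N u v}. (\<lambda>ws. ws @ [v]) ` root_walks N n u)"
    using ws by blast
next
  fix ws assume "ws \<in> (\<Union>u\<in>{u. tilde_adj N u v}. (\<lambda>ws. ws @ [v]) ` root_walks N n u)"
  then obtain u ws' where u: "tilde_adj N u v" and ws': "ws' \<in> root_walks N n u"
    and ws: "ws = ws' @ [v]"
    by blast
  from ws' have len': "length ws' = n + 1" and start: "ws' ! 0 = []" and last_u: "ws' ! n = u"
    and adj: "\<forall>k<n. tilde_adj N (ws' ! k) (ws' ! (k + 1))"
    by (auto simp: root_walks_def)
  have prefix: "ws ! k = ws' ! k" if "k \<le> n" for k
    using that len' ws by (simp add: nth_append)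
  have last: "ws ! Suc n = v" using len' ws by (simp add: nth_append)
  have "tilde_adj N (ws ! k) (ws ! (k + 1))" if "k < Suc n" for k
    using that adj prefix last last_u u by (cases "k = n") auto
  then show "ws \<in> root_walks N (Suc n) v"
    unfolding root_walks_def using len' ws start prefix last by auto
qed

lemma finite_tilde_neighbours: "finite {u. tilde_adj N u v}"
proof -
  have "{u. tilde_adj N u v} \<subseteq> {[], butlast v} \<union> (\<lambda>i. v @ [i]) ` {1..N}"
    unfolding tilde_adj_def by auto
  then show ?thesis by (rule finite_subset) auto
qed

lemma finite_root_walks: "finite (root_walks N n v)"
  by (induction n arbitrary: v) (simp_all add: root_walks_0 root_walks_Suc finite_tilde_neighbours)

lemma card_root_walks_Suc:
  "card (root_walks N (Suc n) v) = (\<Sum>u\<in>{u. tilde_adj N u v}. card (root_walks N n u))"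
  unfolding root_walks_Suc
proof (subst card_UN_disjoint)
  show "\<forall>u\<in>{u. tilde_adj N u v}. \<forall>u'\<in>{u. tilde_adj N u v}. u \<noteq> u' \<longrightarrow>
      (\<lambda>ws. ws @ [v]) ` root_walks N n u \<inter> (\<lambda>ws. ws @ [v]) ` root_walks N n u' = {}"
    by (auto simp: root_walks_def)
  show "(\<Sum>u\<in>{u. tilde_adj N u v}. card ((\<lambda>ws. ws @ [v]) ` root_walks N n u)) =
      (\<Sum>u\<in>{u. tilde_adj N u v}. card (root_walks N n u))"
    by (intro sum.cong refl card_image) (auto simp: inj_on_def)
qed (simp_all add: finite_tilde_neighbours finite_root_walks)

lemma tilde_neighbours:
  assumes "v \<in> tree_vertices N"
  shows "{u. tilde_adj N u v} = (if v = [] then {[]} else {butlast v}) \<union> (\<lambda>i. v @ [i]) ` {1..N}"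
proof -
  have v: "set v \<subseteq> {1..N}" using assms by (simp add: tree_vertices_def)
  have parent: "butlast v \<in> tree_vertices N \<and> v = butlast v @ [last v] \<and> last v \<in> {1..N}"
    if "v \<noteq> []"
  proof -
    have "last v \<in> {1..N}" using that v last_in_set[of v] by blast
    then show ?thesis using that v in_set_butlastD[of _ v] by (auto simp: tree_vertices_def)
  qed
  have children: "v @ [i] \<in> tree_vertices N" if "i \<in> {1..N}" for i
    using v that by (simp add: tree_vertices_def)
  show ?thesis
  proof (intro equalityI subsetI)
    fix u assume "u \<in> {u. tilde_adj N u v}"
    then show "u \<in> (if v = [] then {[]} else {butlast v}) \<union> (\<lambda>i. v @ [i]) ` {1..N}"
      unfolding tilde_adj_def by auto
  next
    fix u assume "u \<in> (if v = [] then {[]} else {butlast v}) \<union> (\<lambda>i. v @ [i]) ` {1..N}"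
    then consider "v = []" "u = []" | "v \<noteq> []" "u = butlast v" | i where "i \<in> {1..N}" "u = v @ [i]"
      by (auto split: if_splits)
    then show "u \<in> {u. tilde_adj N u v}"
    proof cases
      case 1
      then show ?thesis using assms by (simp add: tilde_adj_def)
    next
      case 2
      then show ?thesis
        using assms parent[OF 2(1)] unfolding tilde_adj_def
        by (intro CollectI conjI disjI1 bexI[of _ "last v"]) auto
    next
      case 3
      then show ?thesis using assms children unfolding tilde_adj_def by blast
    qed
  qed
qed

lemma card_root_walks:
  "v \<in> tree_vertices N \<Longrightarrow> card (root_walks N n v) = depth_walks N n (length v)"
proof (induction n arbitrary: v)
  case 0
  then show ?case by (simp add: root_walks_0)
next
  case (Suc n)
  have children: "(\<Sum>u\<in>(\<lambda>i. v @ [i]) ` {1..N}. card (root_walks N n u))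
      = N * depth_walks N n (Suc (length v))"
  proof -
    have "(\<Sum>u\<in>(\<lambda>i. v @ [i]) ` {1..N}. card (root_walks N n u))
        = (\<Sum>i\<in>{1..N}. card (root_walks N n (v @ [i])))"
      by (subst sum.reindex) (auto simp: inj_on_def)
    also have "\<dots> = (\<Sum>i\<in>{1..N}. depth_walks N n (Suc (length v)))"
      using Suc by (intro sum.cong refl) (auto simp: tree_vertices_def)
    finally show ?thesis by simp
  qed
  show ?case
  proof (cases "v = []")
    case True
    have "card (root_walks N (Suc n) v)
        = card (root_walks N n []) + (\<Sum>u\<in>(\<lambda>i. v @ [i]) ` {1..N}. card (root_walks N n u))"
      unfolding card_root_walks_Suc tilde_neighbours[OF Suc.prems] using True
      by (subst sum.union_disjoint) auto
    also have "card (root_walks N n []) = depth_walks N n 0"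
      using Suc.IH[of "[]"] by (simp add: tree_vertices_def)
    finally show ?thesis using children True by simp
  next
    case False
    then obtain d where d: "length v = Suc d" by (cases v) auto
    have "butlast v \<in> tree_vertices N"
      using Suc.prems in_set_butlastD unfolding tree_vertices_def by fastforce
    then have parent: "card (root_walks N n (butlast v)) = depth_walks N n d"
      using Suc.IH d by simp
    have "card (root_walks N (Suc n) v)
        = card (root_walks N n (butlast v)) + (\<Sum>u\<in>(\<lambda>i. v @ [i]) ` {1..N}. card (root_walks N n u))"
      unfolding card_root_walks_Suc tilde_neighbours[OF Suc.prems] using False
      by (subst sum.union_disjoint) (auto dest: arg_cong[of _ _ length])
    then show ?thesis using children parent d by simp
  qed
qed

lemma N_tilde_eq_depth_walks: "N_tilde N n = depth_walks N n 0"
  using card_root_walks[of "[]" N n]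
  by (simp add: N_tilde_def root_paths_eq_root_walks tree_vertices_def)

fun half_line_walks :: "real \<Rightarrow> nat \<Rightarrow> nat \<Rightarrow> real" where
  "half_line_walks a 0 k = (if k = 0 then 1 else 0)"
| "half_line_walks a (Suc n) 0 = (a * half_line_walks a n 0 + half_line_walks a n 1) / 2"
| "half_line_walks a (Suc n) (Suc k) =
    (half_line_walks a n k + half_line_walks a n (Suc (Suc k))) / 2"

lemma half_line_walks_eq_depth_walks:
  assumes "N \<ge> 1"
  shows "half_line_walks (1 / sqrt (real N)) n d
    = real (depth_walks N n d) * sqrt (real N) ^ d / (2 * sqrt (real N)) ^ n"
proof (induction n arbitrary: d)
  case 0
  then show ?case by simp
next
  case (Suc n)
  define s where "s = sqrt (real N)"
  have s: "s > 0" "s * s = real N" using assms by (auto simp: s_def)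
  have IH: "half_line_walks (1 / s) n d = real (depth_walks N n d) * s ^ d / (2 * s) ^ n" for d
    using Suc.IH by (simp add: s_def)
  show ?case
    unfolding s_def[symmetric] using s
    by (cases d) (simp_all add: IH field_simps)
qed

subsection \<open>Chebyshev polynomials of the second kind\<close>

fun chebyshev_U :: "nat \<Rightarrow> real \<Rightarrow> real" where
  "chebyshev_U 0 x = 1"
| "chebyshev_U (Suc 0) x = 2 * x"
| "chebyshev_U (Suc (Suc k)) x = 2 * x * chebyshev_U (Suc k) x - chebyshev_U k x"

lemma chebyshev_U_cos: "chebyshev_U k (cos t) * sin t = sin (real (Suc k) * t)"
proof (induction k rule: induct_nat_012)
  case (ge2 k)
  define s where "s = real (Suc (Suc k)) * t"
  have "chebyshev_U (Suc (Suc k)) (cos t) * sin t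
      = 2 * cos t * (chebyshev_U (Suc k) (cos t) * sin t) - chebyshev_U k (cos t) * sin t"
    by (simp add: algebra_simps)
  also have "\<dots> = 2 * cos t * sin s - sin (s - t)"
    using ge2 by (simp add: s_def algebra_simps)
  also have "\<dots> = sin (s + t)"
    by (simp add: sin_add sin_diff algebra_simps)
  finally show ?case by (simp add: s_def algebra_simps)
qed (simp_all add: sin_double)

lemma chebyshev_U_1: "chebyshev_U k 1 = real (Suc k)"
  by (induction k rule: induct_nat_012) auto

lemma chebyshev_U_minus_1: "chebyshev_U k (-1) = (-1) ^ k * real (Suc k)"
  by (induction k rule: induct_nat_012) (auto simp: algebra_simps)

lemma abs_sin_of_nat_mult_le: "\<bar>sin (real m * t)\<bar> \<le> real m * \<bar>sin t\<bar>"
proof (induction m)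
  case (Suc m)
  have "real (Suc m) * t = real m * t + t" by (simp add: algebra_simps)
  then have "\<bar>sin (real (Suc m) * t)\<bar> = \<bar>sin (real m * t) * cos t + cos (real m * t) * sin t\<bar>"
    by (simp only: sin_add)
  also have "\<dots> \<le> \<bar>sin (real m * t)\<bar> * \<bar>cos t\<bar> + \<bar>cos (real m * t)\<bar> * \<bar>sin t\<bar>"
    by (metis abs_mult abs_triangle_ineq)
  also have "\<dots> \<le> \<bar>sin (real m * t)\<bar> * 1 + 1 * \<bar>sin t\<bar>"
    by (intro add_mono mult_left_mono mult_right_mono) auto
  finally show ?case using Suc by (simp add: algebra_simps)
qed simp

lemma abs_chebyshev_U_le:
  assumes "x \<in> {-1..1}"
  shows "\<bar>chebyshev_U k x\<bar> \<le> real (Suc k)"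
proof (cases "x = 1 \<or> x = -1")
  case True
  then show ?thesis by (auto simp: chebyshev_U_1 chebyshev_U_minus_1 abs_mult)
next
  case False
  define t where "t = arccos x"
  have "x\<^sup>2 < 1" using assms False by (auto simp: abs_square_less_1)
  then have sin_t: "sin t > 0" using assms by (simp add: t_def sin_arccos)
  have cos_t: "cos t = x" using assms by (simp add: t_def)
  have "\<bar>chebyshev_U k x\<bar> * sin t = \<bar>chebyshev_U k x * sin t\<bar>"
    using sin_t by (simp add: abs_mult)
  also have "\<dots> = \<bar>sin (real (Suc k) * t)\<bar>"
    using chebyshev_U_cos[of k t] by (simp only: cos_t)
  also have "\<dots> \<le> real (Suc k) * sin t"
    using abs_sin_of_nat_mult_le[of "Suc k" t] sin_t by simp
  finally show ?thesis using sin_t by simp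
qed

lemma continuous_on_chebyshev_U: "continuous_on S (chebyshev_U k)"
  by (induction k rule: induct_nat_012) (auto intro!: continuous_on_diff continuous_on_mult)

definition semicircle :: "real \<Rightarrow> real" where
  "semicircle x = 2 / pi * sqrt (1 - x\<^sup>2)"

lemma semicircle_nonneg: "x \<in> {-1..1} \<Longrightarrow> 0 \<le> semicircle x"
  by (simp add: semicircle_def abs_square_le_1 abs_le_iff)

text \<open>Substituting \<open>x = cos t\<close> turns the integral into \<open>2/\<pi> \<integral>\<^sub>0\<^sup>\<pi> sin ((k+1) t) sin t dt\<close>.\<close>
lemma has_integral_chebyshev_U_semicircle:
  "((\<lambda>x. chebyshev_U k x * semicircle x) has_integral (if k = 0 then 1 else 0)) {-1..1}"
proof -
  define G :: "real \<Rightarrow> real" where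
    "G = (\<lambda>t. if k = 0 then (t - sin (2 * t) / 2) / 2
             else (sin (real k * t) / real k - sin (real (k + 2) * t) / real (k + 2)) / 2)"
  have G_deriv: "(G has_real_derivative (sin (real (Suc k) * t) * sin t)) (at t)" for t
  proof (cases "k = 0")
    case True
    have "((\<lambda>t. (t - sin (2 * t) / 2) / 2) has_real_derivative ((1 - cos (2 * t) * 2 / 2) / 2)) (at t)"
      by (auto intro!: derivative_eq_intros)
    moreover have "(1 - cos (2 * t) * 2 / 2) / 2 = sin (real (Suc k) * t) * sin t"
      using True cos_double_sin[of t] by (simp add: power2_eq_square algebra_simps)
    ultimately show ?thesis using True unfolding G_def by simp
  next
    case False
    have "((\<lambda>t. (sin (real k * t) / real k - sin (real (k + 2) * t) / real (k + 2)) / 2) has_real_derivative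
         ((cos (real k * t) * real k / real k - cos (real (k + 2) * t) * real (k + 2) / real (k + 2)) / 2)) (at t)"
      by (auto intro!: derivative_eq_intros)
    moreover have "(cos (real k * t) * real k / real k - cos (real (k + 2) * t) * real (k + 2) / real (k + 2)) / 2
       = sin (real (Suc k) * t) * sin t"
    proof -
      have "sin (real (Suc k) * t) * sin t = (cos (real (Suc k) * t - t) - cos (real (Suc k) * t + t)) / 2"
        by (rule sin_times_sin)
      also have "real (Suc k) * t - t = real k * t" by (simp add: algebra_simps)
      also have "real (Suc k) * t + t = real (k + 2) * t" by (simp add: algebra_simps)
      finally show ?thesis using False by simp
    qed
    ultimately show ?thesis using False unfolding G_def by simp
  qed
  define F where "F = (\<lambda>x. - (2 / pi) * G (arccos x))"
  have G_cont: "continuous_on UNIV G"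
    using DERIV_isCont[OF G_deriv] by (simp add: continuous_at_imp_continuous_on)
  have F_cont: "continuous_on {-1..1} F" unfolding F_def
    by (intro continuous_intros continuous_on_compose2[OF G_cont]) auto
  have F_deriv: "(F has_vector_derivative chebyshev_U k x * semicircle x) (at x)" if x: "x \<in> {-1<..<1}" for x
  proof -
    have d: "(F has_real_derivative - (2 / pi) * (sin (real (Suc k) * arccos x) * sin (arccos x) * inverse (- sqrt (1 - x\<^sup>2)))) (at x)"
      unfolding F_def using x by (intro DERIV_cmult DERIV_chain2[OF G_deriv] DERIV_arccos) auto
    have "\<bar>x\<bar> < 1" using x by auto
    then have "x\<^sup>2 < 1" by (simp add: abs_square_less_1)
    then have sq: "sqrt (1 - x\<^sup>2) > 0" by simp
    have s: "sin (arccos x) = sqrt (1 - x\<^sup>2)" using x by (simp add: sin_arccos)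
    have e: "sin (real (Suc k) * arccos x) = chebyshev_U k x * sqrt (1 - x\<^sup>2)"
      using chebyshev_U_cos[of k "arccos x"] x s by simp
    have "- (2 / pi) * (sin (real (Suc k) * arccos x) * sin (arccos x) * inverse (- sqrt (1 - x\<^sup>2)))
          = chebyshev_U k x * semicircle x"
      using sq unfolding e s semicircle_def by (simp add: field_simps)
    with d show ?thesis by (simp add: has_real_derivative_iff_has_vector_derivative)
  qed
  have "((\<lambda>x. chebyshev_U k x * semicircle x) has_integral (F 1 - F (-1))) {-1..1}"
    by (rule fundamental_theorem_of_calculus_interior[OF _ F_cont F_deriv]) auto
  moreover have "F 1 - F (-1) = (if k = 0 then 1 else 0)"
  proof -
    have "sin (real (k + 2) * pi) = 0" by (rule sin_npi)
    then show ?thesis unfolding F_def G_def by auto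
  qed
  ultimately show ?thesis by simp
qed

subsection \<open>The orthogonal polynomials of the measure\<close>

fun cp_poly :: "real \<Rightarrow> nat \<Rightarrow> real \<Rightarrow> real" where
  "cp_poly a 0 x = 1"
| "cp_poly a (Suc k) x = chebyshev_U (Suc k) x - a * chebyshev_U k x"

declare cp_poly.simps(2) [simp del]

lemma x_mult_cp_poly_0: "x * cp_poly a 0 x = a / 2 * cp_poly a 0 x + 1 / 2 * cp_poly a 1 x"
  by (simp add: cp_poly.simps(2) field_simps)

lemma x_mult_cp_poly_Suc:
  "x * cp_poly a (Suc k) x = 1 / 2 * cp_poly a k x + 1 / 2 * cp_poly a (Suc (Suc k)) x"
  by (cases k) (auto simp: cp_poly.simps(2) algebra_simps)

lemma continuous_on_cp_poly: "continuous_on S (cp_poly a k)"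
  by (cases k) (auto simp: cp_poly.simps(2) intro!: continuous_intros continuous_on_chebyshev_U)

lemma abs_cp_poly_le:
  assumes "x \<in> {-1..1}" "0 \<le> a" "a \<le> 1"
  shows "\<bar>cp_poly a k x\<bar> \<le> 2 * real (Suc k)"
proof (cases k)
  case (Suc j)
  have "\<bar>cp_poly a k x\<bar> \<le> \<bar>chebyshev_U (Suc j) x\<bar> + a * \<bar>chebyshev_U j x\<bar>"
    using Suc assms abs_triangle_ineq4[of "chebyshev_U (Suc j) x" "a * chebyshev_U j x"]
    by (simp add: abs_mult cp_poly.simps(2))
  also have "\<dots> \<le> real (Suc (Suc j)) + 1 * real (Suc j)"
    using assms abs_chebyshev_U_le[OF assms(1), of "Suc j"] abs_chebyshev_U_le[OF assms(1), of j]
    by (intro add_mono mult_mono) auto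
  finally show ?thesis using Suc by simp
qed simp

lemma has_integral_cp_poly_semicircle:
  "((\<lambda>x. cp_poly a k x * semicircle x) has_integral
      (if k = 0 then 1 else if k = 1 then - a else 0)) {-1..1}"
proof (cases k)
  case 0
  then show ?thesis using has_integral_chebyshev_U_semicircle[of 0] by simp
next
  case (Suc j)
  have integrand: "(\<lambda>x. cp_poly a k x * semicircle x)
      = (\<lambda>x. chebyshev_U (Suc j) x * semicircle x - a * (chebyshev_U j x * semicircle x))"
    using Suc by (simp add: fun_eq_iff algebra_simps cp_poly.simps(2))
  have "(if k = 0 then 1 else if k = 1 then - a else 0) = 0 - a * (if j = 0 then 1 else 0)"
    using Suc by simp
  then show ?thesis
    unfolding integrand
    using has_integral_chebyshev_U_semicircle[of "Suc j"] has_integral_chebyshev_U_semicircle[of j]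
    by (simp only:) (intro has_integral_diff has_integral_mult_right, auto)
qed

lemma cp_denominator_mult_cp_poly_0:
  "(1 - 2 * a * x + a\<^sup>2) * cp_poly a 0 x = cp_poly a 0 x - a * cp_poly a 1 x"
  by (simp add: cp_poly.simps(2) power2_eq_square algebra_simps)

lemma cp_denominator_mult_cp_poly_Suc:
  "(1 - 2 * a * x + a\<^sup>2) * cp_poly a (Suc k) x
    = (cp_poly a (Suc k) x - a * cp_poly a (Suc (Suc k)) x) - a * (cp_poly a k x - a * cp_poly a (Suc k) x)"
proof -
  have "(1 - 2 * a * x + a\<^sup>2) * cp_poly a (Suc k) x
      = (1 + a\<^sup>2) * cp_poly a (Suc k) x - 2 * a * (x * cp_poly a (Suc k) x)"
    by (simp add: algebra_simps)
  then show ?thesis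
    unfolding x_mult_cp_poly_Suc by (simp add: power2_eq_square algebra_simps)
qed

definition cp_density :: "real \<Rightarrow> real \<Rightarrow> real" where
  "cp_density a x = semicircle x / (1 - 2 * a * x + a\<^sup>2)"

lemma mu_cp_density_eq: "mu_cp_density N = cp_density (1 / sqrt (real N))"
  by (simp add: fun_eq_iff mu_cp_density_def cp_density_def semicircle_def power_divide)

lemma cp_denominator_eq: "1 - 2 * a * x + a\<^sup>2 = (1 - a)\<^sup>2 + 2 * a * (1 - (x::real))"
  by (simp add: power2_eq_square algebra_simps)

lemma cp_density_nonneg:
  assumes "0 \<le> a" "x \<in> {-1..1}"
  shows "0 \<le> cp_density a x"
proof -
  have "0 \<le> 1 - 2 * a * x + a\<^sup>2" unfolding cp_denominator_eq using assms by simp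
  then show ?thesis using semicircle_nonneg[OF assms(2)] by (simp add: cp_density_def)
qed

text \<open>The denominator vanishes on \<open>[-1, 1]\<close> only at \<open>x = 1\<close>, \<open>a = 1\<close>, where so does the
  semicircle.\<close>
lemma cp_denominator_mult_cp_density:
  assumes "0 < a" "x \<in> {-1..1}"
  shows "(1 - 2 * a * x + a\<^sup>2) * cp_density a x = semicircle x"
proof (cases "1 - 2 * a * x + a\<^sup>2 = 0")
  case True
  have "0 \<le> 2 * a * (1 - x)" using assms by simp
  then have "2 * a * (1 - x) = 0"
    using True unfolding cp_denominator_eq by (metis add_nonneg_eq_0_iff zero_le_power2)
  then have "x = 1" using assms(1) by simp
  then show ?thesis using True by (simp add: semicircle_def)
qed (simp add: cp_density_def)

lemma has_integral_cp_density_1: "(cp_density 1 has_integral 1) {-1..1}"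
proof -
  define F where "F = (\<lambda>x. (arcsin x - sqrt (1 - x\<^sup>2)) / pi)"
  have F_cont: "continuous_on {-1..1} F" unfolding F_def by (intro continuous_intros) auto
  have F_deriv: "(F has_vector_derivative cp_density 1 x) (at x)" if x: "x \<in> {-1<..<1}" for x
  proof -
    have "x\<^sup>2 < 1" using x by (auto simp: abs_square_less_1)
    define q where "q = sqrt (1 - x\<^sup>2)"
    have q: "q > 0" "q * q = 1 - x\<^sup>2" using \<open>x\<^sup>2 < 1\<close> by (auto simp: q_def)
    have "((\<lambda>x. 1 - x\<^sup>2) has_real_derivative - (2 * x)) (at x)"
      by (auto intro!: derivative_eq_intros)
    from DERIV_chain2[OF DERIV_real_sqrt this]
    have "((\<lambda>x. sqrt (1 - x\<^sup>2)) has_real_derivative (inverse q / 2 * (- (2 * x)))) (at x)"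
      unfolding q_def using \<open>x\<^sup>2 < 1\<close> by simp
    moreover have "(arcsin has_real_derivative inverse q) (at x)"
      unfolding q_def using x by (intro DERIV_arcsin) auto
    ultimately have "(F has_real_derivative (inverse q - inverse q / 2 * (- (2 * x))) / pi) (at x)"
      unfolding F_def by (intro DERIV_cdivide DERIV_diff)
    moreover have "(inverse q - inverse q / 2 * (- (2 * x))) / pi = cp_density 1 x"
    proof -
      have "0 < 1 - x" using x by simp
      have "inverse q - inverse q / 2 * (- (2 * x)) = (1 + x) / q" using q by (simp add: field_simps)
      also have "\<dots> = q / (1 - x)"
        using q \<open>0 < 1 - x\<close> by (simp add: frac_eq_eq algebra_simps power2_eq_square)
      finally have "(inverse q - inverse q / 2 * (- (2 * x))) / pi = q / (1 - x) / pi" by simp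
      also have "\<dots> = 2 / pi * q / (1 - 2 * x + 1)" using \<open>0 < 1 - x\<close> by (simp add: field_simps)
      also have "\<dots> = cp_density 1 x" by (simp add: cp_density_def semicircle_def q_def)
      finally show ?thesis .
    qed
    ultimately show ?thesis by (simp add: has_real_derivative_iff_has_vector_derivative)
  qed
  have "(cp_density 1 has_integral (F 1 - F (-1))) {-1..1}"
    by (rule fundamental_theorem_of_calculus_interior[OF _ F_cont F_deriv]) auto
  then show ?thesis by (simp add: F_def)
qed

lemma cp_density_integrable:
  assumes "0 < a" "a \<le> 1"
  shows "cp_density a integrable_on {-1..1}"
proof (cases "a = 1")
  case True
  then show ?thesis using has_integral_cp_density_1 by blast
next
  case False
  then have "0 < (1 - a)\<^sup>2" by simp
  then have "0 < 1 - 2 * a * x + a\<^sup>2" if "x \<in> {-1..1}" for x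
    using that assms unfolding cp_denominator_eq by (intro add_pos_nonneg) auto
  then have "continuous_on {-1..1} (cp_density a)"
    unfolding cp_density_def semicircle_def by (intro continuous_intros) force+
  then show ?thesis by (rule integrable_continuous_interval)
qed

lemma continuous_mult_cp_density_integrable:
  assumes "0 < a" "a \<le> 1" "continuous_on {-1..1} f"
  shows "(\<lambda>x. f x * cp_density a x) integrable_on {-1..1}"
proof -
  have "cp_density a absolutely_integrable_on {-1..1}"
    using cp_density_integrable[OF assms(1,2)] cp_density_nonneg assms(1)
    by (intro nonnegative_absolutely_integrable_1) auto
  moreover have "f \<in> borel_measurable (lebesgue_on {-1..1})"
    by (rule continuous_imp_measurable_on_sets_lebesgue[OF assms(3)]) auto
  moreover have "bounded (f ` {-1..1})"
    by (intro compact_imp_bounded compact_continuous_image assms(3)) auto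
  ultimately have "(\<lambda>x. f x * cp_density a x) absolutely_integrable_on {-1..1}"
    by (intro absolutely_integrable_bounded_measurable_product_real) auto
  then show ?thesis using absolutely_integrable_on_def by blast
qed

definition cp_integral :: "real \<Rightarrow> (real \<Rightarrow> real) \<Rightarrow> real" where
  "cp_integral a f = integral {-1..1} (\<lambda>x. f x * cp_density a x)"

lemma has_integral_cp_integral:
  assumes "0 < a" "a \<le> 1" "continuous_on {-1..1} f"
  shows "((\<lambda>x. f x * cp_density a x) has_integral cp_integral a f) {-1..1}"
  unfolding cp_integral_def
  using continuous_mult_cp_density_integrable[OF assms] by (simp add: integrable_integral)

lemma cp_integral_diff:
  assumes "0 < a" "a \<le> 1" "continuous_on {-1..1} f" "continuous_on {-1..1} g"
  shows "cp_integral a (\<lambda>x. f x - c * g x) = cp_integral a f - c * cp_integral a g"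
proof -
  have "((\<lambda>x. f x * cp_density a x - c * (g x * cp_density a x))
      has_integral (cp_integral a f - c * cp_integral a g)) {-1..1}"
    using assms by (intro has_integral_diff has_integral_mult_right has_integral_cp_integral)
  then show ?thesis
    unfolding cp_integral_def by (intro integral_unique) (simp add: algebra_simps)
qed

lemma cp_integral_add:
  assumes "0 < a" "a \<le> 1" "continuous_on {-1..1} f" "continuous_on {-1..1} g"
  shows "cp_integral a (\<lambda>x. c * f x + d * g x) = c * cp_integral a f + d * cp_integral a g"
proof -
  have "((\<lambda>x. c * (f x * cp_density a x) + d * (g x * cp_density a x))
      has_integral (c * cp_integral a f + d * cp_integral a g)) {-1..1}"
    using assms by (intro has_integral_add has_integral_mult_right has_integral_cp_integral)
  then show ?thesis
    unfolding cp_integral_def by (intro integral_unique) (simp add: algebra_simps)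
qed

lemma cp_integral_cong: "(\<And>x. x \<in> {-1..1} \<Longrightarrow> f x = g x) \<Longrightarrow> cp_integral a f = cp_integral a g"
  unfolding cp_integral_def by (intro integral_cong) auto

lemma cp_integral_cp_denominator_mult:
  assumes "0 < a"
  shows "cp_integral a (\<lambda>x. (1 - 2 * a * x + a\<^sup>2) * f x) = integral {-1..1} (\<lambda>x. f x * semicircle x)"
  unfolding cp_integral_def using cp_denominator_mult_cp_density[OF assms]
  by (intro integral_cong) (metis mult.assoc mult.commute)

lemma abs_cp_integral_le:
  assumes "0 < a" "a \<le> 1" "continuous_on {-1..1} f" "\<And>x. x \<in> {-1..1} \<Longrightarrow> \<bar>f x\<bar> \<le> B"
  shows "\<bar>cp_integral a f\<bar> \<le> B * integral {-1..1} (cp_density a)"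
proof -
  have "norm (integral {-1..1} (\<lambda>x. f x * cp_density a x))
      \<le> integral {-1..1} (\<lambda>x. B * cp_density a x)"
  proof (rule integral_norm_bound_integral)
    show "(\<lambda>x. f x * cp_density a x) integrable_on {-1..1}"
      by (rule continuous_mult_cp_density_integrable[OF assms(1-3)])
    show "(\<lambda>x. B * cp_density a x) integrable_on {-1..1}"
      using integrable_on_cmult_left[OF cp_density_integrable[OF assms(1,2)], of B] by simp
    show "norm (f x * cp_density a x) \<le> B * cp_density a x" if "x \<in> {-1..1}" for x
      using assms(4)[OF that] cp_density_nonneg[of a x] assms(1) that
      by (simp add: abs_mult mult_right_mono)
  qed
  then show ?thesis unfolding cp_integral_def by simp
qed

lemma cp_integral_cp_poly_diff:
  assumes "0 < a" "a \<le> 1"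
  shows "cp_integral a (cp_poly a k) - a * cp_integral a (cp_poly a (Suc k))
    = (if k = 0 then 1 else 0)"
proof (induction k)
  case 0
  have "cp_integral a (\<lambda>x. (1 - 2 * a * x + a\<^sup>2) * cp_poly a 0 x) = 1"
    unfolding cp_integral_cp_denominator_mult[OF assms(1)]
    using has_integral_cp_poly_semicircle[of a 0] by (simp add: integral_unique)
  moreover have "cp_integral a (\<lambda>x. (1 - 2 * a * x + a\<^sup>2) * cp_poly a 0 x)
      = cp_integral a (\<lambda>x. cp_poly a 0 x - a * cp_poly a 1 x)"
    by (intro cp_integral_cong) (rule cp_denominator_mult_cp_poly_0)
  moreover have "\<dots> = cp_integral a (cp_poly a 0) - a * cp_integral a (cp_poly a 1)"
    by (rule cp_integral_diff[OF assms continuous_on_cp_poly continuous_on_cp_poly])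
  ultimately show ?case by (simp del: cp_poly.simps(1))
next
  case (Suc k)
  have diff: "cp_integral a (\<lambda>x. cp_poly a j x - a * cp_poly a (Suc j) x)
      = cp_integral a (cp_poly a j) - a * cp_integral a (cp_poly a (Suc j))" for j
    by (rule cp_integral_diff[OF assms continuous_on_cp_poly continuous_on_cp_poly])
  have "- a * (if k = 0 then 1 else 0)
      = cp_integral a (\<lambda>x. (1 - 2 * a * x + a\<^sup>2) * cp_poly a (Suc k) x)"
    unfolding cp_integral_cp_denominator_mult[OF assms(1)]
    using has_integral_cp_poly_semicircle[of a "Suc k"] by (simp add: integral_unique)
  also have "\<dots> = cp_integral a (\<lambda>x. (cp_poly a (Suc k) x - a * cp_poly a (Suc (Suc k)) x)
      - a * (cp_poly a k x - a * cp_poly a (Suc k) x))"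
    by (intro cp_integral_cong) (rule cp_denominator_mult_cp_poly_Suc)
  also have "\<dots> = cp_integral a (\<lambda>x. cp_poly a (Suc k) x - a * cp_poly a (Suc (Suc k)) x)
      - a * cp_integral a (\<lambda>x. cp_poly a k x - a * cp_poly a (Suc k) x)"
    using assms by (intro cp_integral_diff continuous_intros continuous_on_cp_poly)
  finally show ?case using Suc.IH by (simp add: diff split: if_splits)
qed

lemma cp_integral_cp_poly_1_eq:
  assumes "0 < a" "a \<le> 1"
  shows "cp_integral a (cp_poly a 1) = a ^ j * cp_integral a (cp_poly a (Suc j))"
proof (induction j)
  case (Suc j)
  then show ?case
    using cp_integral_cp_poly_diff[OF assms, of "Suc j"] by (simp del: cp_poly.simps(1))
qed simp

lemma cp_integral_cp_poly_1:
  assumes "0 < a" "a \<le> 1"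
  shows "cp_integral a (cp_poly a 1) = 0"
proof (cases "a = 1")
  case True
  have "cp_integral a (cp_poly a 0) = 1"
    using has_integral_cp_density_1 True by (simp add: cp_integral_def integral_unique)
  then show ?thesis using cp_integral_cp_poly_diff[OF assms, of 0] True by simp
next
  case False
  define M where "M = integral {-1..1} (cp_density a)"
  have bound: "\<bar>cp_integral a (cp_poly a 1)\<bar> \<le> a ^ j * (2 * real (Suc (Suc j)) * M)" for j
  proof -
    have "\<bar>cp_integral a (cp_poly a (Suc j))\<bar> \<le> 2 * real (Suc (Suc j)) * M"
      unfolding M_def using assms abs_cp_poly_le[of _ a "Suc j"]
      by (intro abs_cp_integral_le continuous_on_cp_poly) auto
    then show ?thesis
      using cp_integral_cp_poly_1_eq[OF assms, of j] assms
      by (simp add: abs_mult mult_left_mono)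
  qed
  have "(\<lambda>j. 2 * M * (real j * a ^ j) + 4 * M * a ^ j) \<longlonglongrightarrow> 2 * M * 0 + 4 * M * 0"
    using assms False
    by (intro tendsto_intros powser_times_n_limit_0 LIMSEQ_power_zero) auto
  then have "(\<lambda>j. a ^ j * (2 * real (Suc (Suc j)) * M)) \<longlonglongrightarrow> 0"
    by (simp add: algebra_simps)
  then have "\<bar>cp_integral a (cp_poly a 1)\<bar> \<le> 0"
    using bound by (intro LIMSEQ_le_const) auto
  then show ?thesis by simp
qed

lemma cp_integral_cp_poly:
  assumes "0 < a" "a \<le> 1"
  shows "cp_integral a (cp_poly a k) = (if k = 0 then 1 else 0)"
proof (cases k)
  case 0
  then show ?thesis
    using cp_integral_cp_poly_diff[OF assms, of 0] cp_integral_cp_poly_1[OF assms] by simp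
next
  case (Suc j)
  then show ?thesis
    using cp_integral_cp_poly_1_eq[OF assms, of j] cp_integral_cp_poly_1[OF assms] assms(1)
    by simp
qed

lemma cp_integral_power_mult_cp_poly:
  assumes "0 < a" "a \<le> 1"
  shows "cp_integral a (\<lambda>x. x ^ n * cp_poly a k x) = half_line_walks a n k"
proof (induction n arbitrary: k)
  case 0
  then show ?case using cp_integral_cp_poly[OF assms] by simp
next
  case (Suc n)
  have cont: "continuous_on {-1..1} (\<lambda>x. x ^ n * cp_poly a k x)" for k
    by (intro continuous_intros continuous_on_cp_poly)
  have power_Suc_mult: "x ^ Suc n * cp_poly a k x = x ^ n * (x * cp_poly a k x)" for x k
    by simp
  show ?case
  proof (cases k)
    case 0
    have "cp_integral a (\<lambda>x. x ^ Suc n * cp_poly a 0 x)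
        = cp_integral a (\<lambda>x. a / 2 * (x ^ n * cp_poly a 0 x) + 1 / 2 * (x ^ n * cp_poly a 1 x))"
      unfolding power_Suc_mult x_mult_cp_poly_0 by (simp add: algebra_simps)
    also have "\<dots> = a / 2 * cp_integral a (\<lambda>x. x ^ n * cp_poly a 0 x)
        + 1 / 2 * cp_integral a (\<lambda>x. x ^ n * cp_poly a 1 x)"
      by (rule cp_integral_add[OF assms cont cont])
    finally show ?thesis
      using 0 unfolding Suc.IH by simp
  next
    case (Suc j)
    have "cp_integral a (\<lambda>x. x ^ Suc n * cp_poly a (Suc j) x)
        = cp_integral a (\<lambda>x. 1 / 2 * (x ^ n * cp_poly a j x)
            + 1 / 2 * (x ^ n * cp_poly a (Suc (Suc j)) x))"
      unfolding power_Suc_mult x_mult_cp_poly_Suc by (simp add: algebra_simps)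
    also have "\<dots> = 1 / 2 * cp_integral a (\<lambda>x. x ^ n * cp_poly a j x)
        + 1 / 2 * cp_integral a (\<lambda>x. x ^ n * cp_poly a (Suc (Suc j)) x)"
      by (rule cp_integral_add[OF assms cont cont])
    finally show ?thesis
      using Suc unfolding Suc.IH by simp
  qed
qed

lemma cp_density_moment:
  assumes "0 < a" "a \<le> 1"
  shows "((\<lambda>x. x ^ n * cp_density a x) has_integral half_line_walks a n 0) {-1..1}"
proof -
  have "((\<lambda>x. x ^ n * cp_density a x) has_integral cp_integral a (\<lambda>x. x ^ n)) {-1..1}"
    using assms by (intro has_integral_cp_integral continuous_intros)
  moreover have "cp_integral a (\<lambda>x. x ^ n) = half_line_walks a n 0"
    using cp_integral_power_mult_cp_poly[OF assms, of n 0] by simp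
  ultimately show ?thesis by simp
qed

theorem theorem4p11:
  fixes N n :: nat
  assumes "N \<ge> 1"
  shows "((\<lambda>x. x ^ n * mu_cp_density N x) has_integral
            (real (N_tilde N n) / (2 * sqrt (real N)) ^ n)) {-1..1}"
proof -
  have a: "0 < 1 / sqrt (real N)" "1 / sqrt (real N) \<le> 1" using assms by auto
  have "half_line_walks (1 / sqrt (real N)) n 0 = real (N_tilde N n) / (2 * sqrt (real N)) ^ n"
    using half_line_walks_eq_depth_walks[OF assms, of n 0] by (simp add: N_tilde_eq_depth_walks)
  then show ?thesis
    using cp_density_moment[OF a, of n] by (simp add: mu_cp_density_eq)
qed

end
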